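(* Let $2\le k\le mn$, let $p_x\in\mathcal{P}_k$, let $\mathcal{D}\subseteq\mathbb{C}$, and let $F:\mathcal{D}\rightarrow M_{m\times n}(\mathbb{C})$ be defined by $F(z)=\sum_{i=0}^{s}A_i z^i$ with $A_i\in M_{m\times n}(\mathbb{C})$. Let $\mathcal{Z}_{p_x}(\mathcal{D})=\{z\in\mathcal{D} : F(z)\text{ has repeated zeros with respect to } p_x\}$. Then either $\mathcal{Z}_{p_x}(\mathcal{D})=\mathcal{D}$ or $\mathcal{Z}_{p_x}(\mathcal{D})$ is finite.
   Context: $M_{m\times n}(\mathbb{C})$ is the set of $m\times n$ complex matrices. Let $\mathbb{C}_k[x]$ be the set of complex polynomials of degree $k$ and $\mathbb{C}^k_{\mathrm{sym}}$ the set of unordered $k$-tuples of complex numbers; $r_k:\mathbb{C}_k[x]\to\mathbb{C}^k_{\mathrm{sym}}$ sends a polynomial to the unordered $k$-tuple of its roots (with multiplicity). $\mathcal{P}_k$ is the set of maps $p_x:M_{m\times n}(\mathbb{C})\to\mathbb{C}_k[x]$ of the form $p_x(A)=x^k+\sum_{i=1}^{k}q_i(A)x^{i-1}$, where each $q_i(A)$ is a polynomial function of the entries of $A$, such that $r_k(p_x(M_{m\times n}(\mathbb{C})))=\mathbb{C}^k_{\mathrm{sym}}$. $A$ has repeated zeros with respect to $p_x$ if the polynomial $p_x(A)$ (in $x$) has a root of multiplicity at least $2$, and distinct zeros otherwise. *)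

theory Defs
  imports "HOL-Analysis.Analysis" "HOL-Computational_Algebra.Polynomial"
begin

text \<open>Complex m x n matrices are rendered as complex ^'n ^'m (m = CARD('m), n = CARD('n)).\<close>

inductive entry_polyfun :: "(complex ^'n ^'m \<Rightarrow> complex) \<Rightarrow> bool" where
  const: "entry_polyfun (\<lambda>A. c)"
| entry: "entry_polyfun (\<lambda>A. A $ i $ j)"
| add: "entry_polyfun f \<Longrightarrow> entry_polyfun g \<Longrightarrow> entry_polyfun (\<lambda>A. f A + g A)"
| mult: "entry_polyfun f \<Longrightarrow> entry_polyfun g \<Longrightarrow> entry_polyfun (\<lambda>A. f A * g A)"

definition in_P :: "nat \<Rightarrow> (complex ^'n ^'m \<Rightarrow> complex poly) \<Rightarrow> bool" where
  "in_P k p \<longleftrightarrow>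
     (\<exists>q :: nat \<Rightarrow> (complex ^'n ^'m \<Rightarrow> complex).
        (\<forall>i\<in>{1..k}. entry_polyfun (q i)) \<and>
        (\<forall>A. p A = monom 1 k + (\<Sum>i=1..k. monom (q i A) (i - 1)))) \<and>
     (\<forall>R :: complex multiset. size R = k \<longrightarrow>
        (\<exists>A. \<forall>a. order a (p A) = count R a))"

definition repeated_zeros :: "(complex ^'n ^'m \<Rightarrow> complex poly) \<Rightarrow> complex ^'n ^'m \<Rightarrow> bool" where
  "repeated_zeros p A \<longleftrightarrow> (\<exists>x. order x (p A) \<ge> 2)"

definition matpoly :: "(nat \<Rightarrow> complex ^'n ^'m) \<Rightarrow> nat \<Rightarrow> complex \<Rightarrow> complex ^'n ^'m" where
  "matpoly A s z = (\<chi> a b. \<Sum>i\<le>s. z ^ i * (A i $ a $ b))"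

end

theory Submission
  imports
    Defs
    "Subresultants.Subresultant_Gcd"
    "HOL-Computational_Algebra.Field_as_Ring"
    "HOL-Computational_Algebra.Fundamental_Theorem_Algebra"
begin

no_notation Matrix.vec_index (infixl \<open>$\<close> 100)

text \<open>Substituting \<open>F(z)\<close> into the coefficients \<open>q\<^sub>i\<close> gives a monic polynomial \<open>H\<close> in \<open>x\<close>
  whose coefficients are polynomials in \<open>z\<close>. Its discriminant \<open>R(z) = Res\<^sub>x(H, \<partial>\<^sub>xH)\<close> is a
  polynomial in \<open>z\<close>, and since \<open>H\<close> is monic, forming the resultant commutes with substituting
  a value for \<open>z\<close>. A complex polynomial has a repeated root iff it shares a root with its
  derivative, i.e. iff that resultant vanishes. So the bad parameters are the zeros of \<open>R\<close>:
  all of \<open>\<complex>\<close> if \<open>R = 0\<close>, finitely many otherwise.\<close>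

lemma entry_polyfun_matpoly_is_poly:
  fixes A :: "nat \<Rightarrow> complex ^'n ^'m"
  assumes "entry_polyfun f"
  shows "\<exists>P. \<forall>z. f (matpoly A s z) = poly P z"
  using assms
proof (induction rule: entry_polyfun.induct)
  case (const c)
  show ?case by (intro exI[of _ "[:c:]"]) simp
next
  case (entry i j)
  show ?case
    by (intro exI[of _ "\<Sum>l\<le>s. monom (A l $ i $ j) l"])
       (simp add: matpoly_def poly_sum poly_monom mult.commute)
next
  case (add f g)
  then obtain P Q where "\<forall>z. f (matpoly A s z) = poly P z" "\<forall>z. g (matpoly A s z) = poly Q z"
    by blast
  then show ?case by (intro exI[of _ "P + Q"]) simp
next
  case (mult f g)
  then obtain P Q where "\<forall>z. f (matpoly A s z) = poly P z" "\<forall>z. g (matpoly A s z) = poly Q z"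
    by blast
  then show ?case by (intro exI[of _ "P * Q"]) simp
qed

definition monic_poly :: "nat \<Rightarrow> (nat \<Rightarrow> 'a::comm_ring_1) \<Rightarrow> 'a poly" where
  "monic_poly k c = monom 1 k + (\<Sum>i=1..k. monom (c i) (i - 1))"

lemma monic_monic_poly: "lead_coeff (monic_poly k c) = 1"
proof (cases "k = 0")
  case False
  have "degree (\<Sum>i=1..k. monom (c i) (i - 1)) \<le> k - 1"
    by (rule degree_sum_le) (auto intro: order.trans[OF degree_monom_le])
  also have "\<dots> < degree (monom 1 k :: 'a poly)"
    using False by (simp add: degree_monom_eq)
  finally show ?thesis
    unfolding monic_poly_def by (simp add: degree_add_eq_left degree_monom_eq coeff_eq_0)
qed (simp add: monic_poly_def)

lemma monic_poly_cong: "(\<And>i. i \<in> {1..k} \<Longrightarrow> c i = d i) \<Longrightarrow> monic_poly k c = monic_poly k d"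
  unfolding monic_poly_def by (auto intro: sum.cong)

lemma (in comm_ring_hom) map_poly_monic_poly:
  "map_poly hom (monic_poly k c) = monic_poly k (hom \<circ> c)"
proof -
  interpret map_poly_hom: map_poly_comm_ring_hom hom ..
  show ?thesis
    by (simp add: monic_poly_def map_poly_hom.hom_add map_poly_hom.hom_sum)
qed

lemma order_ge_2_iff_root_pderiv:
  fixes P :: "'a::{idom,semiring_char_0} poly"
  assumes "P \<noteq> 0"
  shows "order x P \<ge> 2 \<longleftrightarrow> poly P x = 0 \<and> poly (pderiv P) x = 0"
proof (cases "poly P x = 0")
  case True
  have "degree P \<noteq> 0"
  proof
    assume "degree P = 0"
    then obtain c where "P = [:c:]"
      by (rule degree_eq_zeroE)
    with assms True show False
      by simp
  qed
  then have "pderiv P \<noteq> 0"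
    by (simp add: pderiv_eq_0_iff)
  then show ?thesis
    using order_pderiv[OF assms True] order_root[of "pderiv P" x] True by auto
qed (use order_root in force)

lemma repeated_root_iff_resultant_pderiv_eq_0:
  fixes P :: "complex poly"
  assumes "P \<noteq> 0"
  shows "(\<exists>x. order x P \<ge> 2) \<longleftrightarrow> resultant P (pderiv P) = 0"
proof -
  have "(\<exists>x. order x P \<ge> 2) \<longleftrightarrow> (\<exists>x. poly (gcd P (pderiv P)) x = 0)"
    using assms by (simp add: order_ge_2_iff_root_pderiv poly_eq_0_iff_dvd)
  also have "\<dots> \<longleftrightarrow> degree (gcd P (pderiv P)) \<noteq> 0"
    using assms by (metis gcd_eq_0_iff constant_degree fundamental_theorem_of_algebra poly_zero)
  finally show ?thesis
    by (simp add: resultant_0_gcd)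
qed

lemma resultant_pderiv_map_poly_monic:
  fixes hom :: "'a::idom \<Rightarrow> 'b::{idom,ring_char_0}"
  assumes "idom_hom hom" and "monic H"
  shows "resultant (map_poly hom H) (pderiv (map_poly hom H)) = hom (resultant H (pderiv H))"
proof -
  interpret idom_hom hom by fact
  have deg: "degree (map_poly hom H) = degree H"
    using assms(2) by (intro degree_map_poly) auto
  have pderiv_hom: "map_poly hom (pderiv H) = pderiv (map_poly hom H)"
    by (rule map_poly_pderiv)
  have "degree (pderiv (map_poly hom H)) = degree H - 1"
    using deg by (simp add: degree_pderiv)
  moreover have "degree (map_poly hom (pderiv H)) \<le> degree (pderiv H)"
    by (rule degree_map_poly_le)
  moreover have "degree (pderiv H) \<le> degree H - 1"
    by (rule degree_pderiv_le)
  ultimately have "degree (map_poly hom (pderiv H)) = degree (pderiv H)"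
    using pderiv_hom by simp
  then show ?thesis
    using resultant_map_poly[OF deg] pderiv_hom by metis
qed

lemma repeated_root_locus_UNIV_or_finite:
  fixes H :: "complex poly poly"
  assumes "monic H"
  shows "(\<forall>z. \<exists>x. order x (map_poly (\<lambda>c. poly c z) H) \<ge> 2)
    \<or> finite {z. \<exists>x. order x (map_poly (\<lambda>c. poly c z) H) \<ge> 2}"
proof -
  define R where "R = resultant H (pderiv H)"
  have "(\<exists>x. order x (map_poly (\<lambda>c. poly c z) H) \<ge> 2) \<longleftrightarrow> poly R z = 0" for z
  proof -
    have "lead_coeff (map_poly (\<lambda>c. poly c z) H) = 1"
      using assms by (subst lead_coeff_map_poly_nz) auto
    then have "map_poly (\<lambda>c. poly c z) H \<noteq> 0"
      by (metis coeff_0 zero_neq_one)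
    then show ?thesis
      unfolding R_def
      by (simp add: repeated_root_iff_resultant_pderiv_eq_0
          resultant_pderiv_map_poly_monic[OF poly_hom.idom_hom_axioms assms])
  qed
  then show ?thesis
    using poly_roots_finite[of R] by (cases "R = 0") auto
qed

theorem theorem5p4:
  fixes k s :: nat and p :: "complex ^'n ^'m \<Rightarrow> complex poly"
    and D :: "complex set" and A :: "nat \<Rightarrow> complex ^'n ^'m"
  assumes "2 \<le> k" and "k \<le> CARD('m) * CARD('n)" and "in_P k p"
  shows "{z \<in> D. repeated_zeros p (matpoly A s z)} = D
         \<or> finite {z \<in> D. repeated_zeros p (matpoly A s z)}"
proof -
  obtain q :: "nat \<Rightarrow> complex ^'n ^'m \<Rightarrow> complex"
    where q: "\<forall>i\<in>{1..k}. entry_polyfun (q i)"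
      and p: "\<And>B. p B = monic_poly k (\<lambda>i. q i B)"
    using assms(3) unfolding in_P_def monic_poly_def by blast
  have "\<forall>i\<in>{1..k}. \<exists>P. \<forall>z. q i (matpoly A s z) = poly P z"
    using q entry_polyfun_matpoly_is_poly by blast
  then obtain Q where Q: "\<forall>i\<in>{1..k}. \<forall>z. q i (matpoly A s z) = poly (Q i) z"
    by (metis bchoice)
  have "p (matpoly A s z) = map_poly (\<lambda>c. poly c z) (monic_poly k Q)" for z
  proof -
    have "p (matpoly A s z) = monic_poly k ((\<lambda>c. poly c z) \<circ> Q)"
      unfolding p by (rule monic_poly_cong) (use Q in auto)
    then show ?thesis
      by (simp add: poly_hom.map_poly_monic_poly)
  qed
  then have "(\<forall>z. repeated_zeros p (matpoly A s z))
      \<or> finite {z. repeated_zeros p (matpoly A s z)}"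
    using repeated_root_locus_UNIV_or_finite[OF monic_monic_poly, of k Q]
    by (simp add: repeated_zeros_def)
  moreover have "{z \<in> D. repeated_zeros p (matpoly A s z)} = D \<inter> {z. repeated_zeros p (matpoly A s z)}"
    by blast
  ultimately show ?thesis
    by auto
qed

end
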